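(* Let $\mathbb L$ be a tropical Lagrangian multi-section over a complete fan $\Sigma$, let $\tau\in\Sigma$ with a chosen splitting $\iota_\tau$, and let $\tau'$ be a lift of $\tau$. If $\mathbb L$ is separable, then its localization $\mathbb L_{\tau'}$ along $\tau'$ is also separable.
   Context: $N$ is a lattice, $M=N^*$, $\Sigma$ a complete fan in $N_{\mathbb R}$. A tropical Lagrangian multi-section over $\Sigma$ is $\mathbb L=(L,\Sigma',\mu,\pi,\varphi)$: a cone complex $\Sigma'$ with support $L$, a surjective map $\pi:L\to|\Sigma|$ mapping each cone $\sigma'\in\Sigma'$ isomorphically onto a cone of $\Sigma$, multiplicities $\mu:\Sigma'\to\mathbb Z_{>0}$ with constant total multiplicity over each point, and a continuous $\varphi$ on $L$ linear on each maximal cone $\sigma'$ with slope $m(\sigma')\in M$. $\mathbb L$ is separable if for every $\tau\in\Sigma$ and distinct lifts $\tau^{(\alpha)}\ne\tau^{(\beta)}$ of $\tau$ in $\Sigma'$, $\varphi|_{\tau^{(\alpha)}}\ne\varphi|_{\tau^{(\beta)}}$ (as functions on $\tau$ via $\pi$). Localization: for $\tau\in\Sigma$, $N_\tau=N/(\mathbb R\tau\cap N)$, $p_\tau:N\to N_\tau$, $M_\tau=\tau^\perp\cap M$, a splitting $\iota_\tau$ of $p_\tau$ with dual $\iota_\tau^*:M\to M_\tau$, quotient fan $\Sigma_\tau$ with cones $K_\tau(\sigma)=p_\tau(\sigma)$, $\sigma\supset\tau$; for a lift $\tau'$ of $\tau$, $\mathbb L_{\tau'}$ is the tropical Lagrangian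 multi-section over $\Sigma_\tau$ with cones $K_\tau(\sigma)\times\{\iota_\tau^*m(\sigma')\}$ for cones $\sigma'\supset\tau'$ over $\sigma$, glued along common faces over $\Sigma_\tau$, multiplicity $\mu(\sigma')$, and piecewise linear function of slope $\iota_\tau^*m(\sigma')$ on the cone indexed by $\sigma'$. *)

theory Defs
  imports "HOL-Analysis.Analysis"
begin

text \<open>The lattice N is modelled as the integer points of real^'n; the dual lattice M is
  identified with the integer points of real^'n via the standard inner product.\<close>

definition lattice_vec :: "real^'n \<Rightarrow> bool" where
  "lattice_vec v \<longleftrightarrow> (\<forall>i. v $ i \<in> \<int>)"

definition rat_cone :: "(real^'n) set \<Rightarrow> bool" where
  "rat_cone \<sigma> \<longleftrightarrow> (\<exists>S. finite S \<and> (\<forall>v\<in>S. lattice_vec v) \<and>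
      \<sigma> = {x. \<exists>c. (\<forall>v\<in>S. c v \<ge> 0) \<and> x = (\<Sum>v\<in>S. c v *\<^sub>R v)})"

definition fan :: "(real^'n) set set \<Rightarrow> bool" where
  "fan \<Sigma> \<longleftrightarrow> finite \<Sigma>
     \<and> (\<forall>\<sigma>\<in>\<Sigma>. rat_cone \<sigma> \<and> \<sigma> \<inter> uminus ` \<sigma> = {0})
     \<and> (\<forall>\<sigma>\<in>\<Sigma>. \<forall>\<tau>. \<tau> face_of \<sigma> \<and> \<tau> \<noteq> {} \<longrightarrow> \<tau> \<in> \<Sigma>)
     \<and> (\<forall>\<sigma>\<in>\<Sigma>. \<forall>\<sigma>2\<in>\<Sigma>. (\<sigma> \<inter> \<sigma>2) face_of \<sigma> \<and> (\<sigma> \<inter> \<sigma>2) face_of \<sigma>2)"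

definition complete_fan :: "(real^'n) set set \<Rightarrow> bool" where
  "complete_fan \<Sigma> \<longleftrightarrow> fan \<Sigma> \<and> \<Union>\<Sigma> = UNIV"

text \<open>Abstract cone complex: a finite set C of cones with face relation fle.
  prj c is the cone of the fan onto which the cone c is mapped isomorphically.\<close>
definition is_max_cone :: "'c set \<Rightarrow> ('c \<Rightarrow> 'c \<Rightarrow> bool) \<Rightarrow> 'c \<Rightarrow> bool" where
  "is_max_cone C fle s \<longleftrightarrow> s \<in> C \<and> (\<forall>d\<in>C. fle s d \<longrightarrow> d = s)"

definition tlms ::
  "(real^'n) set set \<Rightarrow> 'c set \<Rightarrow> ('c \<Rightarrow> 'c \<Rightarrow> bool) \<Rightarrow> ('c \<Rightarrow> (real^'n) set)
     \<Rightarrow> ('c \<Rightarrow> nat) \<Rightarrow> ('c \<Rightarrow> real^'n) \<Rightarrow> bool" where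
  "tlms \<Sigma> C fle prj mu m \<longleftrightarrow>
     complete_fan \<Sigma> \<and> finite C
     \<comment> \<open>face relation: a partial order on C\<close>
     \<and> (\<forall>a b. fle a b \<longrightarrow> a \<in> C \<and> b \<in> C)
     \<and> (\<forall>a\<in>C. fle a a)
     \<and> (\<forall>a b. fle a b \<and> fle b a \<longrightarrow> a = b)
     \<and> (\<forall>a b c. fle a b \<and> fle b c \<longrightarrow> fle a c)
     \<comment> \<open>two cones meet in a common face (or not at all)\<close>
     \<and> (\<forall>c1\<in>C. \<forall>c2\<in>C. (\<exists>d. fle d c1 \<and> fle d c2) \<longrightarrow>
          (\<exists>g. fle g c1 \<and> fle g c2 \<and> (\<forall>d. fle d c1 \<and> fle d c2 \<longrightarrow> fle d g)))
     \<comment> \<open>prj maps each cone isomorphically onto a cone of the fan\<close>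
     \<and> (\<forall>c\<in>C. prj c \<in> \<Sigma>
          \<and> bij_betw prj {d. fle d c} {\<rho>. \<rho> face_of prj c \<and> \<rho> \<noteq> {}}
          \<and> (\<forall>d1 d2. fle d1 c \<and> fle d2 c \<longrightarrow> (fle d1 d2 \<longleftrightarrow> prj d1 \<subseteq> prj d2)))
     \<comment> \<open>surjectivity\<close>
     \<and> (\<forall>\<sigma>\<in>\<Sigma>. \<exists>c\<in>C. prj c = \<sigma>)
     \<comment> \<open>multiplicities with constant total multiplicity\<close>
     \<and> (\<forall>c\<in>C. mu c > 0)
     \<and> (\<exists>r. \<forall>\<sigma>\<in>\<Sigma>. (\<Sum>c\<in>{c\<in>C. prj c = \<sigma>}. mu c) = r)
     \<comment> \<open>slopes in M on maximal cones, and continuity of phi\<close>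
     \<and> (\<forall>s. is_max_cone C fle s \<longrightarrow> lattice_vec (m s))
     \<and> (\<forall>s1 s2 d. is_max_cone C fle s1 \<and> is_max_cone C fle s2 \<and> fle d s1 \<and> fle d s2
          \<longrightarrow> (\<forall>x\<in>prj d. m s1 \<bullet> x = m s2 \<bullet> x))"

text \<open>Restriction of phi to a cone c, as a function on prj c: the linear function of slope
  m s for any maximal cone s containing c (well defined by continuity).\<close>
definition phi_res :: "'c set \<Rightarrow> ('c \<Rightarrow> 'c \<Rightarrow> bool) \<Rightarrow> ('c \<Rightarrow> real^'n) \<Rightarrow> 'c \<Rightarrow> real^'n \<Rightarrow> real" where
  "phi_res C fle m c x = m (SOME s. is_max_cone C fle s \<and> fle c s) \<bullet> x"

definition separable ::
  "(real^'n) set set \<Rightarrow> 'c set \<Rightarrow> ('c \<Rightarrow> 'c \<Rightarrow> bool) \<Rightarrow> ('c \<Rightarrow> (real^'n) set)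
     \<Rightarrow> ('c \<Rightarrow> real^'n) \<Rightarrow> bool" where
  "separable \<Sigma> C fle prj m \<longleftrightarrow>
     (\<forall>\<tau>\<in>\<Sigma>. \<forall>a\<in>C. \<forall>b\<in>C. prj a = \<tau> \<and> prj b = \<tau> \<and> a \<noteq> b \<longrightarrow>
        (\<exists>x\<in>\<tau>. phi_res C fle m a x \<noteq> phi_res C fle m b x))"

text \<open>Localization data. N_tau is presented as the integer lattice of real^'k via a
  surjective lattice map p with kernel the span of tau; iota is a splitting of p.\<close>
definition quotient_data :: "(real^'n) set \<Rightarrow> (real^'n \<Rightarrow> real^'k) \<Rightarrow> (real^'k \<Rightarrow> real^'n) \<Rightarrow> bool" where
  "quotient_data \<tau> p \<iota> \<longleftrightarrow>
     linear p \<and> (\<forall>v. lattice_vec v \<longrightarrow> lattice_vec (p v))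
     \<and> (\<forall>w. lattice_vec w \<longrightarrow> (\<exists>v. lattice_vec v \<and> p v = w))
     \<and> {x. p x = 0} = span \<tau>
     \<and> linear \<iota> \<and> (\<forall>w. lattice_vec w \<longrightarrow> lattice_vec (\<iota> w))
     \<and> (\<forall>y. p (\<iota> y) = y)"

text \<open>Dual of the splitting: M \<rightarrow> M_tau = Hom(N_tau, Z), m \<mapsto> m \<circ> iota.\<close>
definition dual_map :: "(real^'k \<Rightarrow> real^'n) \<Rightarrow> real^'n \<Rightarrow> real^'k" where
  "dual_map \<iota> m = (\<chi> j. m \<bullet> \<iota> (axis j 1))"

definition quotient_fan :: "(real^'n) set set \<Rightarrow> (real^'n) set \<Rightarrow> (real^'n \<Rightarrow> real^'k) \<Rightarrow> (real^'k) set set" where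
  "quotient_fan \<Sigma> \<tau> p = {p ` \<sigma> | \<sigma>. \<sigma> \<in> \<Sigma> \<and> \<tau> face_of \<sigma>}"

text \<open>Localized multi-section along a lift tau': cones of the star of tau', projected.\<close>
definition loc_cones :: "'c set \<Rightarrow> ('c \<Rightarrow> 'c \<Rightarrow> bool) \<Rightarrow> 'c \<Rightarrow> 'c set" where
  "loc_cones C fle \<tau>' = {c\<in>C. fle \<tau>' c}"

definition loc_fle :: "'c set \<Rightarrow> ('c \<Rightarrow> 'c \<Rightarrow> bool) \<Rightarrow> 'c \<Rightarrow> 'c \<Rightarrow> 'c \<Rightarrow> bool" where
  "loc_fle C fle \<tau>' a b \<longleftrightarrow> fle a b \<and> fle \<tau>' a \<and> fle \<tau>' b"

definition loc_pi :: "('c \<Rightarrow> (real^'n) set) \<Rightarrow> (real^'n \<Rightarrow> real^'k) \<Rightarrow> 'c \<Rightarrow> (real^'k) set" where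
  "loc_pi prj p c = p ` prj c"

definition loc_slope :: "('c \<Rightarrow> real^'n) \<Rightarrow> (real^'k \<Rightarrow> real^'n) \<Rightarrow> 'c \<Rightarrow> real^'k" where
  "loc_slope m \<iota> c = dual_map \<iota> (m c)"

end

theory Submission
  imports Defs
begin

text \<open>Distinct cones \<open>a, b \<supseteq> \<tau>'\<close> with the same image in \<open>\<Sigma>\<^sub>\<tau>\<close> lie over the same cone of \<open>\<Sigma>\<close>,
  because cones of a fan containing \<open>\<tau>\<close> are determined by their images modulo \<open>span \<tau>\<close>.
  Separability of \<open>\<LL>\<close> then gives a point \<open>x\<close> where the restrictions of \<open>\<phi>\<close> to \<open>a\<close> and \<open>b\<close>
  differ. Both restrictions agree on \<open>span \<tau>\<close>, as they extend \<open>\<phi>\<close> on \<open>\<tau>'\<close>, so they still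
  differ at \<open>\<iota> (p x)\<close>; there they are the localized functions evaluated at \<open>p x\<close>.\<close>

lemma rat_cone_imp_convex_cone:
  assumes "rat_cone \<sigma>"
  shows "convex_cone \<sigma>"
proof -
  obtain S where S: "\<sigma> = {x. \<exists>c. (\<forall>v\<in>S. c v \<ge> 0) \<and> x = (\<Sum>v\<in>S. c v *\<^sub>R v)}"
    using assms unfolding rat_cone_def by blast
  have zero: "0 \<in> \<sigma>"
    unfolding S mem_Collect_eq by (rule exI[of _ "\<lambda>v. 0"]) simp
  have add: "x + y \<in> \<sigma>" if "x \<in> \<sigma>" "y \<in> \<sigma>" for x y
  proof -
    obtain c where "\<forall>v\<in>S. c v \<ge> 0" "x = (\<Sum>v\<in>S. c v *\<^sub>R v)"
      using \<open>x \<in> \<sigma>\<close> unfolding S by auto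
    moreover obtain d where "\<forall>v\<in>S. d v \<ge> 0" "y = (\<Sum>v\<in>S. d v *\<^sub>R v)"
      using \<open>y \<in> \<sigma>\<close> unfolding S by auto
    ultimately
    have "(\<forall>v\<in>S. c v + d v \<ge> 0) \<and> x + y = (\<Sum>v\<in>S. (c v + d v) *\<^sub>R v)"
      by (simp add: scaleR_add_left sum.distrib)
    then show ?thesis
      unfolding S mem_Collect_eq by (rule exI[of _ "\<lambda>v. c v + d v"])
  qed
  have scale: "k *\<^sub>R x \<in> \<sigma>" if "x \<in> \<sigma>" "k \<ge> 0" for x k
  proof -
    obtain c where "\<forall>v\<in>S. c v \<ge> 0" "x = (\<Sum>v\<in>S. c v *\<^sub>R v)"
      using \<open>x \<in> \<sigma>\<close> unfolding S by auto
    with \<open>k \<ge> 0\<close> have "(\<forall>v\<in>S. k * c v \<ge> 0) \<and> k *\<^sub>R x = (\<Sum>v\<in>S. (k * c v) *\<^sub>R v)"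
      by (simp add: scaleR_sum_right)
    then show ?thesis
      unfolding S mem_Collect_eq by (rule exI[of _ "\<lambda>v. k * c v"])
  qed
  show ?thesis
    unfolding convex_cone_iff using zero add scale by blast
qed

lemma span_convex_cone_eq_differences:
  assumes "convex_cone S"
  shows "span S = {x - y |x y. x \<in> S \<and> y \<in> S}"
proof
  let ?D = "{x - y |x y. x \<in> S \<and> y \<in> S}"
  have "subspace ?D"
    unfolding subspace_def
  proof (intro conjI ballI allI)
    show "0 \<in> ?D"
      using convex_cone_contains_0[OF assms] by force
  next
    fix u v assume "u \<in> ?D" "v \<in> ?D"
    then obtain a b c d where "a \<in> S" "b \<in> S" "c \<in> S" "d \<in> S" "u = a - b" "v = c - d"
      by blast
    then have "u + v = (a + c) - (b + d)" "a + c \<in> S" "b + d \<in> S"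
      using convex_cone_add[OF assms] by auto
    then show "u + v \<in> ?D" by blast
  next
    fix k :: real and u assume "u \<in> ?D"
    then obtain a b where ab: "a \<in> S" "b \<in> S" "u = a - b" by blast
    show "k *\<^sub>R u \<in> ?D"
    proof (cases "k \<ge> 0")
      case True
      then have "k *\<^sub>R u = k *\<^sub>R a - k *\<^sub>R b" "k *\<^sub>R a \<in> S" "k *\<^sub>R b \<in> S"
        using ab convex_cone_scaleR[OF assms] by (auto simp: scaleR_diff_right)
      then show ?thesis by blast
    next
      case False
      then have "0 \<le> -k" by simp
      then have "(-k) *\<^sub>R a \<in> S" "(-k) *\<^sub>R b \<in> S"
        using ab convex_cone_scaleR[OF assms] by blast+
      moreover have "k *\<^sub>R u = (-k) *\<^sub>R b - (-k) *\<^sub>R a"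
        using ab by (simp add: scaleR_diff_right)
      ultimately show ?thesis by blast
    qed
  qed
  moreover have "S \<subseteq> ?D"
    using convex_cone_contains_0[OF assms] by force
  ultimately show "span S \<subseteq> ?D"
    by (simp add: span_minimal)
  show "?D \<subseteq> span S"
    by (clarsimp simp: span_base span_diff)
qed

lemma face_of_convex_cone_summand:
  assumes "F face_of S" "convex_cone S" "x \<in> S" "y \<in> S" "x + y \<in> F"
  shows "x \<in> F"
proof -
  have "conic F"
    using face_of_conic assms(1,2) unfolding convex_cone_def by blast
  then have mid: "midpoint x y \<in> F"
    using assms(5) unfolding midpoint_def by (simp add: conic_mul)
  show ?thesis
  proof (cases "x = y")
    case True
    then show ?thesis using mid by simp
  next
    case False
    then show ?thesis
      using face_ofD[OF assms(1) midpoint_in_open_segment[THEN iffD2, OF False] assms(3,4) mid] by blast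
  qed
qed

lemma convex_cone_subset_if_image_subset:
  fixes p :: "'a::real_vector \<Rightarrow> 'b::real_vector"
  assumes cone1: "convex_cone \<sigma>1" and cone2: "convex_cone \<sigma>2"
    and face: "(\<sigma>1 \<inter> \<sigma>2) face_of \<sigma>1"
    and cone: "convex_cone \<tau>" and sub1: "\<tau> \<subseteq> \<sigma>1" and sub2: "\<tau> \<subseteq> \<sigma>2"
    and lin: "linear p" and ker: "{x. p x = 0} = span \<tau>"
    and img: "p ` \<sigma>1 \<subseteq> p ` \<sigma>2"
  shows "\<sigma>1 \<subseteq> \<sigma>2"
proof
  fix x assume x: "x \<in> \<sigma>1"
  obtain y where y: "y \<in> \<sigma>2" "p y = p x"
    using img x by (metis image_eqI imageE subsetD)
  have "p (x - y) = 0"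
    using y linear_diff[OF lin] by simp
  then have "x - y \<in> span \<tau>"
    using ker by blast
  then obtain u1 u2 where u: "u1 \<in> \<tau>" "u2 \<in> \<tau>" "x - y = u1 - u2"
    using span_convex_cone_eq_differences[OF cone] by blast
  have "x + u2 \<in> \<sigma>1"
    using convex_cone_add[OF cone1 x] u(2) sub1 by blast
  moreover have "x + u2 = y + u1"
    using u(3) by (simp add: algebra_simps)
  then have "x + u2 \<in> \<sigma>2"
    using convex_cone_add[OF cone2 y(1)] u(1) sub2 by auto
  ultimately have "x + u2 \<in> \<sigma>1 \<inter> \<sigma>2" by blast
  then have "x \<in> \<sigma>1 \<inter> \<sigma>2"
    using face_of_convex_cone_summand[OF face cone1 x] u(2) sub1 by blast
  then show "x \<in> \<sigma>2" by blast
qed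

lemma fan_cone_eq_if_image_eq:
  fixes p :: "real^'n \<Rightarrow> real^'k"
  assumes "fan \<Sigma>" "\<sigma>1 \<in> \<Sigma>" "\<sigma>2 \<in> \<Sigma>" "\<tau> \<in> \<Sigma>" "\<tau> \<subseteq> \<sigma>1" "\<tau> \<subseteq> \<sigma>2"
    and "linear p" "{x. p x = 0} = span \<tau>" "p ` \<sigma>1 = p ` \<sigma>2"
  shows "\<sigma>1 = \<sigma>2"
proof -
  have cone: "convex_cone \<sigma>" if "\<sigma> \<in> \<Sigma>" for \<sigma>
    using assms(1) that rat_cone_imp_convex_cone unfolding fan_def by blast
  have face: "(\<sigma> \<inter> \<sigma>') face_of \<sigma>" if "\<sigma> \<in> \<Sigma>" "\<sigma>' \<in> \<Sigma>" for \<sigma> \<sigma>'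
    using assms(1) that unfolding fan_def by blast
  show ?thesis
  proof
    show "\<sigma>1 \<subseteq> \<sigma>2"
      using convex_cone_subset_if_image_subset[OF cone[OF assms(2)] cone[OF assms(3)]
          face[OF assms(2,3)] cone[OF assms(4)] assms(5,6,7,8)] assms(9) by simp
    show "\<sigma>2 \<subseteq> \<sigma>1"
      using convex_cone_subset_if_image_subset[OF cone[OF assms(3)] cone[OF assms(2)]
          face[OF assms(3,2)] cone[OF assms(4)] assms(6,5,7,8)] assms(9) by simp
  qed
qed

lemma dual_map_inner:
  assumes "linear (\<iota>::real^'k \<Rightarrow> real^'n)"
  shows "dual_map \<iota> v \<bullet> y = v \<bullet> \<iota> y"
proof -
  have "y = (\<Sum>i\<in>UNIV. y $ i *\<^sub>R axis i 1)"
    using basis_expansion[of y] by (simp add: scalar_mult_eq_scaleR)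
  then have "\<iota> y = (\<Sum>i\<in>UNIV. y $ i *\<^sub>R \<iota> (axis i 1))"
    by (metis (no_types, lifting) assms linear_scale linear_sum sum.cong)
  then have "v \<bullet> \<iota> y = (\<Sum>i\<in>UNIV. y $ i * (v \<bullet> \<iota> (axis i 1)))"
    by (simp add: inner_sum_right)
  then show ?thesis
    unfolding dual_map_def inner_vec_def by (simp add: mult.commute)
qed

lemma finite_partial_order_has_maximal_above:
  assumes fin: "finite C" and dom: "\<forall>a b. fle a b \<longrightarrow> a \<in> C \<and> b \<in> C"
    and refl: "\<forall>a\<in>C. fle a a" and antisym: "\<forall>a b. fle a b \<and> fle b a \<longrightarrow> a = b"
    and trans: "\<forall>a b c. fle a b \<and> fle b c \<longrightarrow> fle a c"
    and a: "a \<in> C"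
  shows "\<exists>s. is_max_cone C fle s \<and> fle a s"
proof -
  define R where "R = {(d, e). fle e d \<and> d \<noteq> e}"
  have "R \<subseteq> C \<times> C"
    using dom unfolding R_def by blast
  then have "finite R"
    using fin by (meson finite_SigmaI finite_subset)
  moreover have "trans R"
  proof (rule transI)
    fix x y z assume "(x, y) \<in> R" "(y, z) \<in> R"
    then have "fle y x" "fle z y" "x \<noteq> y"
      unfolding R_def by auto
    then show "(x, z) \<in> R"
      using trans antisym unfolding R_def by blast
  qed
  then have "acyclic R"
    unfolding acyclic_def R_def by simp
  ultimately have "wf R"
    by (rule finite_acyclic_wf)
  moreover have "a \<in> {d. fle a d}"
    using refl a by simp
  ultimately obtain s where s: "s \<in> {d. fle a d}" and max: "\<And>d. (d, s) \<in> R \<Longrightarrow> d \<notin> {d. fle a d}"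
    by (rule wfE_min) blast+
  have "d = s" if "d \<in> C" "fle s d" for d
  proof (rule ccontr)
    assume "d \<noteq> s"
    with that(2) have "(d, s) \<in> R"
      unfolding R_def by simp
    moreover have "fle a d"
      using trans s that(2) by blast
    ultimately show False
      using max by blast
  qed
  then have "is_max_cone C fle s"
    unfolding is_max_cone_def using s dom by blast
  with s show ?thesis by blast
qed

lemma tlmsD:
  assumes "tlms \<Sigma> C fle prj mu m"
  shows tlms_complete_fan: "complete_fan \<Sigma>"
    and tlms_finite: "finite C"
    and tlms_dom: "\<forall>a b. fle a b \<longrightarrow> a \<in> C \<and> b \<in> C"
    and tlms_refl: "\<forall>a\<in>C. fle a a"
    and tlms_antisym: "\<forall>a b. fle a b \<and> fle b a \<longrightarrow> a = b"
    and tlms_trans: "\<forall>a b c. fle a b \<and> fle b c \<longrightarrow> fle a c"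
    and tlms_prj: "\<forall>c\<in>C. prj c \<in> \<Sigma>
          \<and> bij_betw prj {d. fle d c} {\<rho>. \<rho> face_of prj c \<and> \<rho> \<noteq> {}}
          \<and> (\<forall>d1 d2. fle d1 c \<and> fle d2 c \<longrightarrow> (fle d1 d2 \<longleftrightarrow> prj d1 \<subseteq> prj d2))"
    and tlms_continuous: "\<forall>s1 s2 d. is_max_cone C fle s1 \<and> is_max_cone C fle s2 \<and> fle d s1 \<and> fle d s2
          \<longrightarrow> (\<forall>x\<in>prj d. m s1 \<bullet> x = m s2 \<bullet> x)"
  using assms[unfolded tlms_def] by - (elim conjE, assumption)+

lemma tlms_face_subset:
  assumes "tlms \<Sigma> C fle prj mu m" "fle d c"
  shows "prj d \<subseteq> prj c"
proof -
  have "c \<in> C"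
    using tlms_dom[OF assms(1)] assms(2) by blast
  then have "bij_betw prj {d. fle d c} {\<rho>. \<rho> face_of prj c \<and> \<rho> \<noteq> {}}"
    using tlms_prj[OF assms(1)] by blast
  then have "prj d face_of prj c"
    using assms(2) bij_betwE by fastforce
  then show ?thesis
    by (rule face_of_imp_subset)
qed

lemma tlms_phi_res_eq_slope:
  assumes "tlms \<Sigma> C fle prj mu m" "c \<in> C"
  obtains s where "is_max_cone C fle s" "fle c s" "phi_res C fle m c = (\<lambda>x. m s \<bullet> x)"
proof -
  have "\<exists>s. is_max_cone C fle s \<and> fle c s"
    using finite_partial_order_has_maximal_above[OF tlms_finite[OF assms(1)] tlms_dom[OF assms(1)]
        tlms_refl[OF assms(1)] tlms_antisym[OF assms(1)] tlms_trans[OF assms(1)] assms(2)] .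
  from someI_ex[OF this] show ?thesis
    using that unfolding phi_res_def by blast
qed

lemma linear_phi_res: "linear (phi_res C fle m c)"
  unfolding phi_res_def by (simp add: bounded_linear.linear bounded_linear_inner_right)

lemma tlms_phi_res_eq_on_span_common_face:
  assumes L: "tlms \<Sigma> C fle prj mu m" and "fle d a" "fle d b" "x \<in> span (prj d)"
  shows "phi_res C fle m a x = phi_res C fle m b x"
proof -
  have "a \<in> C" "b \<in> C"
    using tlms_dom[OF L] assms(2,3) by blast+
  then obtain sa sb where sa: "is_max_cone C fle sa" "fle a sa" "phi_res C fle m a = (\<lambda>x. m sa \<bullet> x)"
    and sb: "is_max_cone C fle sb" "fle b sb" "phi_res C fle m b = (\<lambda>x. m sb \<bullet> x)"
    using tlms_phi_res_eq_slope[OF L] by metis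
  have "fle d sa" "fle d sb"
    using tlms_trans[OF L] assms(2,3) sa(2) sb(2) by blast+
  then have "m sa \<bullet> y = m sb \<bullet> y" if "y \<in> prj d" for y
    using tlms_continuous[OF L, rule_format, of sa sb d y] sa(1) sb(1) that by blast
  then have "phi_res C fle m a y = phi_res C fle m b y" if "y \<in> prj d" for y
    using sa(3) sb(3) that by simp
  then show ?thesis
    by (rule linear_eq_on_span[OF linear_phi_res linear_phi_res _ assms(4)])
qed

lemma tlms_loc_phi_res_eq:
  assumes L: "tlms \<Sigma> C fle prj mu m" and "linear \<iota>" and "fle \<tau>' c"
  shows "phi_res (loc_cones C fle \<tau>') (loc_fle C fle \<tau>') (loc_slope m \<iota>) c y
       = phi_res C fle m c (\<iota> y)"
proof -
  have "is_max_cone (loc_cones C fle \<tau>') (loc_fle C fle \<tau>') s \<and> loc_fle C fle \<tau>' c s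
      \<longleftrightarrow> is_max_cone C fle s \<and> fle c s" for s
    using tlms_dom[OF L] tlms_trans[OF L] assms(3)
    unfolding is_max_cone_def loc_cones_def loc_fle_def by blast
  then show ?thesis
    unfolding phi_res_def loc_slope_def dual_map_inner[OF assms(2)] by simp
qed

lemma tlms_prj_eq_if_loc_pi_eq:
  assumes L: "tlms \<Sigma> C fle prj mu m" and "\<tau> \<in> \<Sigma>" and Q: "quotient_data \<tau> p \<iota>"
    and "prj \<tau>' = \<tau>" and a: "fle \<tau>' a" and b: "fle \<tau>' b"
    and eq: "loc_pi prj p a = loc_pi prj p b"
  shows "prj a = prj b"
proof (rule fan_cone_eq_if_image_eq)
  show "fan \<Sigma>"
    using tlms_complete_fan[OF L] unfolding complete_fan_def by simp
  show "prj a \<in> \<Sigma>" "prj b \<in> \<Sigma>"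
    using tlms_prj[OF L] tlms_dom[OF L] a b by blast+
  show "prj \<tau>' \<subseteq> prj a" "prj \<tau>' \<subseteq> prj b"
    using tlms_face_subset[OF L] a b by blast+
  show "prj \<tau>' \<in> \<Sigma>" "linear p" "{x. p x = 0} = span (prj \<tau>')"
    using assms(2,4) Q unfolding quotient_data_def by simp_all
  show "p ` prj a = p ` prj b"
    using eq unfolding loc_pi_def .
qed

lemma tlms_loc_phi_res_neq:
  assumes L: "tlms \<Sigma> C fle prj mu m" and Q: "quotient_data \<tau> p \<iota>"
    and "prj \<tau>' = \<tau>" and a: "fle \<tau>' a" and b: "fle \<tau>' b"
    and neq: "phi_res C fle m a x \<noteq> phi_res C fle m b x"
  shows "phi_res (loc_cones C fle \<tau>') (loc_fle C fle \<tau>') (loc_slope m \<iota>) a (p x)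
       \<noteq> phi_res (loc_cones C fle \<tau>') (loc_fle C fle \<tau>') (loc_slope m \<iota>) b (p x)"
proof -
  have lin: "linear p" "linear \<iota>" and ker: "{x. p x = 0} = span \<tau>" and split: "p (\<iota> (p x)) = p x"
    using Q unfolding quotient_data_def by simp_all
  have "p (x - \<iota> (p x)) = 0"
    using split linear_diff[OF lin(1)] by simp
  then have "x - \<iota> (p x) \<in> span (prj \<tau>')"
    using ker assms(3) by blast
  then have "phi_res C fle m a (x - \<iota> (p x)) = phi_res C fle m b (x - \<iota> (p x))"
    by (rule tlms_phi_res_eq_on_span_common_face[OF L a b])
  with neq have "phi_res C fle m a (\<iota> (p x)) \<noteq> phi_res C fle m b (\<iota> (p x))"
    by (simp add: linear_diff[OF linear_phi_res])
  then show ?thesis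
    using tlms_loc_phi_res_eq[OF L lin(2) a] tlms_loc_phi_res_eq[OF L lin(2) b] by simp
qed

theorem propositionB3:
  fixes \<Sigma> :: "(real^'n) set set" and C :: "'c set" and fle :: "'c \<Rightarrow> 'c \<Rightarrow> bool"
    and prj :: "'c \<Rightarrow> (real^'n) set" and mu :: "'c \<Rightarrow> nat" and m :: "'c \<Rightarrow> real^'n"
    and \<tau> :: "(real^'n) set" and \<tau>' :: 'c
    and p :: "real^'n \<Rightarrow> real^'k" and \<iota> :: "real^'k \<Rightarrow> real^'n"
  assumes "tlms \<Sigma> C fle prj mu m"
    and "\<tau> \<in> \<Sigma>"
    and "quotient_data \<tau> p \<iota>"
    and "\<tau>' \<in> C" and "prj \<tau>' = \<tau>"
    and "separable \<Sigma> C fle prj m"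
  shows "separable (quotient_fan \<Sigma> \<tau> p) (loc_cones C fle \<tau>') (loc_fle C fle \<tau>')
           (loc_pi prj p) (loc_slope m \<iota>)"
  unfolding separable_def
proof (intro ballI impI)
  fix \<rho> a b
  assume "a \<in> loc_cones C fle \<tau>'" "b \<in> loc_cones C fle \<tau>'"
    and img: "loc_pi prj p a = \<rho> \<and> loc_pi prj p b = \<rho> \<and> a \<noteq> b"
  then have a: "fle \<tau>' a" "a \<in> C" and b: "fle \<tau>' b" "b \<in> C"
    unfolding loc_cones_def by auto
  have "prj a = prj b"
    using tlms_prj_eq_if_loc_pi_eq[OF assms(1,2,3,5) a(1) b(1)] img by simp
  moreover have "prj a \<in> \<Sigma>"
    using tlms_prj[OF assms(1)] a(2) by blast
  ultimately obtain x where x: "x \<in> prj a" "phi_res C fle m a x \<noteq> phi_res C fle m b x"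
    using assms(6) a(2) b(2) img unfolding separable_def by blast
  have "p x \<in> \<rho>"
    using img x(1) unfolding loc_pi_def by blast
  with tlms_loc_phi_res_neq[OF assms(1,3,5) a(1) b(1) x(2)]
  show "\<exists>y\<in>\<rho>. phi_res (loc_cones C fle \<tau>') (loc_fle C fle \<tau>') (loc_slope m \<iota>) a y
      \<noteq> phi_res (loc_cones C fle \<tau>') (loc_fle C fle \<tau>') (loc_slope m \<iota>) b y"
    by blast
qed

end
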